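(* Let $R$ be a commutative ring, $\underline{x}=x_1,\ldots,x_r$ a sequence of elements of $R$, $\underline{U}=U_1,\ldots,U_r$ variables over $R$, and $X$ an arbitrary $R$-complex. Then there is an isomorphism of $R$-complexes \[ \operatorname{Hom}_R(\mathcal{L}_{\underline{x}},X)\cong K_\bullet(\underline{x}-\underline{U};X[[\underline{U}]]), \] where the right-hand side is the Koszul complex of the sequence $\underline{x}-\underline{U}=x_1-U_1,\ldots,x_r-U_r$ in $R[\underline{U}]$ with respect to the $R[\underline{U}]$-complex $X[[\underline{U}]]$.
   Context: For $x\in R$ and a variable $U$, $\mathcal{L}_x$ denotes the $R$-complex $0\to R[U]\xrightarrow{\psi} UR[U]\to 0$, with $R[U]$ in cohomological degree $0$ and $UR[U]$ (the $R$-submodule of polynomials without constant term) in cohomological degree $1$, where $\psi(r(U))=r(0)-(1-xU)\,r(U)$. For $\underline{x}=x_1,\ldots,x_r$ put $\mathcal{L}_{\underline{x}}=\mathcal{L}_{x_1}\otimes_R\cdots\otimes_R\mathcal{L}_{x_r}$, where $\mathcal{L}_{x_i}$ is formed with the variable $U_i$. $\operatorname{Hom}_R(-,-)$ denotes the total Hom complex. For an $R$-complex $X$, $X[[\underline{U}]]$ is the complex whose $i$-th term is $\operatorname{Hom}_R(R[\underline{U}],X^i)$, identified with the module of formal power series $\sum_{\alpha\in\mathbb{N}^r}m_\alpha\underline{U}^\alpha$ with $m_\alpha\in X^i$, with differential applied coefficientwise; it is an $R[\underline{U}]$-complex via multiplication of power series. Koszul complexes: for a commutative ring $S$, a sequence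 $\underline{t}=t_1,\ldots,t_r$ in $S$ and an $S$-complex $Y$, $K_\bullet(\underline{t};S)$ is the usual Koszul complex (exterior algebra on $S^r$ with differential induced by $e_i\mapsto t_i$, in homological degrees $0,\ldots,r$), $K_\bullet(\underline{t};Y)=K_\bullet(\underline{t};S)\otimes_S Y$, $K^\bullet(\underline{t};Y)=\operatorname{Hom}_S(K_\bullet(\underline{t};S),Y)$; their (co)homology is denoted $H_i(\underline{t};Y)$ resp. $H^i(\underline{t};Y)$. *)

theory Defs
  imports Main "HOL-Library.Function_Algebras"
begin

text \<open>An R-complex (R a commutative ring, given as a type of class comm_ring_1) is
represented by: the modules X^i (i :: int) as subsets carr i of one ambient abelian
group 'm (every family of modules embeds in its direct sum, so this is no loss of
generality), an R-action smul on 'm, and differentials diff i : X^i -> X^(i+1)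
(cohomological grading).\<close>

record ('r, 'm) cpx =
  carr :: "int \<Rightarrow> 'm set"
  smul :: "'r \<Rightarrow> 'm \<Rightarrow> 'm"
  diff :: "int \<Rightarrow> 'm \<Rightarrow> 'm"

definition is_complex :: "('r::comm_ring_1, 'm::ab_group_add) cpx \<Rightarrow> bool" where
  "is_complex X \<longleftrightarrow>
    (\<forall>n. 0 \<in> carr X n
       \<and> (\<forall>a\<in>carr X n. \<forall>b\<in>carr X n. a + b \<in> carr X n)
       \<and> (\<forall>a\<in>carr X n. - a \<in> carr X n)
       \<and> (\<forall>c. \<forall>a\<in>carr X n. smul X c a \<in> carr X n)
       \<and> (\<forall>c d. \<forall>a\<in>carr X n. smul X (c + d) a = smul X c a + smul X d a)
       \<and> (\<forall>c. \<forall>a\<in>carr X n. \<forall>b\<in>carr X n. smul X c (a + b) = smul X c a + smul X c b)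
       \<and> (\<forall>c d. \<forall>a\<in>carr X n. smul X (c * d) a = smul X c (smul X d a))
       \<and> (\<forall>a\<in>carr X n. smul X 1 a = a)
       \<and> (\<forall>a\<in>carr X n. diff X n a \<in> carr X (n + 1))
       \<and> (\<forall>a\<in>carr X n. \<forall>b\<in>carr X n. diff X n (a + b) = diff X n a + diff X n b)
       \<and> (\<forall>c. \<forall>a\<in>carr X n. diff X n (smul X c a) = smul X c (diff X n a))
       \<and> (\<forall>a\<in>carr X n. diff X (n + 1) (diff X n a) = 0))"

definition cpx_iso :: "('r, 'm::ab_group_add) cpx \<Rightarrow> ('r, 'n::ab_group_add) cpx \<Rightarrow> bool" where
  "cpx_iso X Y \<longleftrightarrow>
    (\<exists>F :: int \<Rightarrow> 'm \<Rightarrow> 'n. \<forall>n.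
        bij_betw (F n) (carr X n) (carr Y n)
      \<and> (\<forall>a\<in>carr X n. \<forall>b\<in>carr X n. F n (a + b) = F n a + F n b)
      \<and> (\<forall>c. \<forall>a\<in>carr X n. F n (smul X c a) = smul Y c (F n a))
      \<and> (\<forall>a\<in>carr X n. F (n + 1) (diff X n a) = diff Y n (F n a)))"

definition sg :: "nat \<Rightarrow> 'b::ab_group_add \<Rightarrow> 'b" where
  "sg k y = (if even k then y else - y)"

text \<open>Exponent vectors are functions alpha :: nat => nat supported in {..<r}.
A polynomial (resp. power series) with coefficients in 'b is a coefficient function
(nat => nat) => 'b vanishing outside such exponent vectors (finitely supported for
polynomials).\<close>

definition expvec :: "nat \<Rightarrow> (nat \<Rightarrow> nat) \<Rightarrow> bool" where
  "expvec r \<alpha> \<longleftrightarrow> (\<forall>k\<ge>r. \<alpha> k = 0)"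

text \<open>Multiplication by the variable U_i.\<close>
definition mulU :: "nat \<Rightarrow> ((nat \<Rightarrow> nat) \<Rightarrow> 'b::zero) \<Rightarrow> (nat \<Rightarrow> nat) \<Rightarrow> 'b" where
  "mulU i f \<alpha> = (if \<alpha> i = 0 then 0 else f (\<alpha>(i := \<alpha> i - 1)))"

text \<open>Setting U_i := 0.\<close>
definition atzero :: "nat \<Rightarrow> ((nat \<Rightarrow> nat) \<Rightarrow> 'b::zero) \<Rightarrow> (nat \<Rightarrow> nat) \<Rightarrow> 'b" where
  "atzero i f \<alpha> = (if \<alpha> i = 0 then f \<alpha> else 0)"

definition psi :: "'a::comm_ring_1 \<Rightarrow> nat \<Rightarrow> ((nat \<Rightarrow> nat) \<Rightarrow> 'a) \<Rightarrow> (nat \<Rightarrow> nat) \<Rightarrow> 'a" where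
  "psi xi i q = atzero i q - (q - (\<lambda>\<alpha>. xi * mulU i q \<alpha>))"

text \<open>L_x = L_{x_1} (x) ... (x) L_{x_r}, with R[U_1] (x) ... (x) R[U_r] identified with
R[U_1,...,U_r]. Its degree-p component is the direct sum over subsets S of {..<r}
with |S| = p of the R-modules (prod_{i in S} U_i) R[U]; an element is a function
S => polynomial.\<close>

definition Lcarr :: "nat \<Rightarrow> int \<Rightarrow> (nat set \<Rightarrow> (nat \<Rightarrow> nat) \<Rightarrow> 'a::comm_ring_1) set" where
  "Lcarr r p = {g. \<forall>S.
      (g S \<noteq> 0 \<longrightarrow> S \<subseteq> {..<r} \<and> int (card S) = p)
    \<and> finite {\<alpha>. g S \<alpha> \<noteq> 0}
    \<and> (\<forall>\<alpha>. g S \<alpha> \<noteq> 0 \<longrightarrow> expvec r \<alpha> \<and> (\<forall>i\<in>S. 1 \<le> \<alpha> i))}"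

text \<open>Tensor product differential (Koszul sign rule).\<close>
definition Ldiff :: "nat \<Rightarrow> (nat \<Rightarrow> 'a::comm_ring_1) \<Rightarrow> (nat set \<Rightarrow> (nat \<Rightarrow> nat) \<Rightarrow> 'a)
    \<Rightarrow> nat set \<Rightarrow> (nat \<Rightarrow> nat) \<Rightarrow> 'a" where
  "Ldiff r x g T = (if T \<subseteq> {..<r} then
      (\<Sum>i\<in>T. sg (card {j\<in>T. j < i}) (psi (x i) i (g (T - {i}))))
    else 0)"

text \<open>Hom_R(L,X)^n = prod_p Hom_R(L^p, X^(p+n)); an element is a family phi p of
R-linear maps L^p -> X^(p+n) (extended by 0 outside L^p); differential
d(phi) = d_X o phi - (-1)^n phi o d_L.\<close>

definition HomL :: "nat \<Rightarrow> (nat \<Rightarrow> 'a::comm_ring_1) \<Rightarrow> ('a, 'm::ab_group_add) cpx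
    \<Rightarrow> ('a, int \<Rightarrow> (nat set \<Rightarrow> (nat \<Rightarrow> nat) \<Rightarrow> 'a) \<Rightarrow> 'm) cpx" where
  "HomL r x X =
    \<lparr> carr = (\<lambda>n. {\<phi>. \<forall>p.
          (\<forall>g\<in>Lcarr r p. \<phi> p g \<in> carr X (p + n))
        \<and> (\<forall>g. g \<notin> Lcarr r p \<longrightarrow> \<phi> p g = 0)
        \<and> (\<forall>g\<in>Lcarr r p. \<forall>g'\<in>Lcarr r p. \<phi> p (g + g') = \<phi> p g + \<phi> p g')
        \<and> (\<forall>c. \<forall>g\<in>Lcarr r p. \<phi> p (\<lambda>S \<alpha>. c * g S \<alpha>) = smul X c (\<phi> p g))}),
      smul = (\<lambda>c \<phi> p g. smul X c (\<phi> p g)),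
      diff = (\<lambda>n \<phi> p g. if g \<in> Lcarr r p then
                 diff X (p + n) (\<phi> p g) - (if even n then \<phi> (p + 1) (Ldiff r x g) else - \<phi> (p + 1) (Ldiff r x g))
               else 0) \<rparr>"

definition mulT :: "('a, 'm::ab_group_add) cpx \<Rightarrow> 'a \<Rightarrow> nat
    \<Rightarrow> ((nat \<Rightarrow> nat) \<Rightarrow> 'm) \<Rightarrow> (nat \<Rightarrow> nat) \<Rightarrow> 'm" where
  "mulT X xi i f = (\<lambda>\<alpha>. smul X xi (f \<alpha>)) - mulU i f"

text \<open>K_k(x-U; R[U]) is free on e_S, S subset of {..<r}, |S| = k (homological
degree k = cohomological degree -k). The total complex of K_.(x-U;R[U]) (x)_{R[U]} X[[U]]
in cohomological degree n is the direct sum over S of X^(n+|S|)[[U]] e_S; an element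
is a function S => power series. Differential:
d(e_S (x) y) = d_K(e_S) (x) y + (-1)^|S| e_S (x) d_X y.\<close>

definition KosX :: "nat \<Rightarrow> (nat \<Rightarrow> 'a::comm_ring_1) \<Rightarrow> ('a, 'm::ab_group_add) cpx
    \<Rightarrow> ('a, nat set \<Rightarrow> (nat \<Rightarrow> nat) \<Rightarrow> 'm) cpx" where
  "KosX r x X =
    \<lparr> carr = (\<lambda>n. {h. \<forall>S \<alpha>.
          if S \<subseteq> {..<r} \<and> expvec r \<alpha> then h S \<alpha> \<in> carr X (n + int (card S))
          else h S \<alpha> = 0}),
      smul = (\<lambda>c h S \<alpha>. smul X c (h S \<alpha>)),
      diff = (\<lambda>n h T. if T \<subseteq> {..<r} then
                 (\<Sum>i\<in>{..<r} - T. sg (card {j\<in>T. j < i}) (mulT X (x i) i (h (insert i T))))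
               + sg (card T) (\<lambda>\<alpha>. if expvec r \<alpha> then diff X (n + int (card T)) (h T \<alpha>) else 0)
               else 0) \<rparr>"

end

theory Submission
  imports Defs
begin

text \<open>
  In degree p, \<open>L\<close> is the free R-module on the monomials \<open>e_S U^\<beta>\<close> with \<open>|S| = p\<close> and
  \<open>\<beta> i \<ge> 1\<close> for \<open>i \<in> S\<close>.  Writing \<open>\<beta> = \<alpha> + 1_S\<close>, an R-linear map from \<open>L^p\<close> to \<open>X^m\<close> is
  therefore the same as a family, indexed by S, of power series \<open>\<Sum>\<^sub>\<alpha> \<phi>(e_S U^(\<alpha> + 1_S)) U^\<alpha>\<close>
  with coefficients in \<open>X^m\<close>; this identifies \<open>Hom(L, X)^n\<close> degreewise with the direct sum of the
  \<open>X^(n + |S|)[[U]] e_S\<close>.  The i-th component of the differential of L sends \<open>U^\<beta>\<close> to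
  \<open>x_i U^(\<beta> + 1_i) - U^\<beta>\<close> (the second term only when \<open>\<beta> i > 0\<close>); dually, this is multiplication by
  \<open>x_i - U_i\<close> on coefficient series, i.e. the Koszul differential.  Twisting the identification by
  the sign \<open>(-1)^(k n + k (k + 1) / 2)\<close> on the summands with \<open>|S| = k\<close> reconciles the sign
  conventions of the Hom complex and of the Koszul complex.
\<close>

lemma sum_apply: "(\<Sum>i\<in>I. f i) y = (\<Sum>i\<in>I. f i y)"
  by (induction I rule: infinite_finite_induct) auto

lemma sum_eq_single:
  "finite A \<Longrightarrow> i \<in> A \<Longrightarrow> (\<And>j. j \<in> A \<Longrightarrow> j \<noteq> i \<Longrightarrow> f j = 0) \<Longrightarrow> sum f A = f i"
  by (simp add: sum.remove sum.neutral)

locale r_complex =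
  fixes X :: "('a::comm_ring_1, 'm::ab_group_add) cpx"
  assumes is_complex: "is_complex X"
begin

lemma carr_zero: "0 \<in> carr X n"
  and carr_add: "a \<in> carr X n \<Longrightarrow> b \<in> carr X n \<Longrightarrow> a + b \<in> carr X n"
  and carr_uminus: "a \<in> carr X n \<Longrightarrow> - a \<in> carr X n"
  and carr_smul: "a \<in> carr X n \<Longrightarrow> smul X c a \<in> carr X n"
  and smul_add_left: "a \<in> carr X n \<Longrightarrow> smul X (c + d) a = smul X c a + smul X d a"
  and smul_add_right: "a \<in> carr X n \<Longrightarrow> b \<in> carr X n \<Longrightarrow> smul X c (a + b) = smul X c a + smul X c b"
  and smul_mult: "a \<in> carr X n \<Longrightarrow> smul X (c * d) a = smul X c (smul X d a)"
  and smul_one: "a \<in> carr X n \<Longrightarrow> smul X 1 a = a"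
  and differential_add: "a \<in> carr X n \<Longrightarrow> b \<in> carr X n \<Longrightarrow> diff X n (a + b) = diff X n a + diff X n b"
  using is_complex unfolding is_complex_def by metis+

lemma smul_zero_right: "smul X c 0 = 0"
  using smul_add_right[OF carr_zero carr_zero, where c=c] by simp

lemma smul_zero_left: "a \<in> carr X n \<Longrightarrow> smul X 0 a = 0"
  using smul_add_left[of a n 0 0] by simp

lemma smul_uminus_right: "a \<in> carr X n \<Longrightarrow> smul X c (- a) = - smul X c a"
  using smul_add_right[OF _ carr_uminus, of a n a c] by (simp add: smul_zero_right eq_neg_iff_add_eq_0 add.commute)

lemma smul_uminus_left: "a \<in> carr X n \<Longrightarrow> smul X (- c) a = - smul X c a"
  using smul_add_left[of a n c "- c"] by (simp add: smul_zero_left eq_neg_iff_add_eq_0 add.commute)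

lemma differential_zero: "diff X n 0 = 0"
  using differential_add[OF carr_zero carr_zero, of n] by simp

lemma differential_uminus: "a \<in> carr X n \<Longrightarrow> diff X n (- a) = - diff X n a"
  using differential_add[OF _ carr_uminus, of a n a] by (simp add: differential_zero eq_neg_iff_add_eq_0 add.commute)

lemma carr_sum: "finite A \<Longrightarrow> (\<And>i. i \<in> A \<Longrightarrow> f i \<in> carr X n) \<Longrightarrow> sum f A \<in> carr X n"
  by (induction A rule: finite_induct) (auto intro: carr_add carr_zero)

lemma smul_sum:
  "finite A \<Longrightarrow> (\<And>i. i \<in> A \<Longrightarrow> f i \<in> carr X n) \<Longrightarrow> smul X c (sum f A) = (\<Sum>i\<in>A. smul X c (f i))"
proof (induction A rule: finite_induct)
  case (insert a A)
  then have "smul X c (f a + sum f A) = smul X c (f a) + smul X c (sum f A)"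
    by (intro smul_add_right carr_sum) auto
  with insert show ?case by simp
qed (simp add: smul_zero_right)

end

definition Lmono :: "nat set \<Rightarrow> (nat \<Rightarrow> nat) \<Rightarrow> nat set \<Rightarrow> (nat \<Rightarrow> nat) \<Rightarrow> 'a::comm_ring_1" where
  "Lmono T \<beta> = (\<lambda>S \<gamma>. if S = T \<and> \<gamma> = \<beta> then 1 else 0)"

definition Lscale :: "'a::comm_ring_1 \<Rightarrow> (nat set \<Rightarrow> (nat \<Rightarrow> nat) \<Rightarrow> 'a) \<Rightarrow> nat set \<Rightarrow> (nat \<Rightarrow> nat) \<Rightarrow> 'a" where
  "Lscale c g = (\<lambda>S \<gamma>. c * g S \<gamma>)"

definition card_subsets :: "nat \<Rightarrow> int \<Rightarrow> nat set set" where
  "card_subsets r p = {S. S \<subseteq> {..<r} \<and> int (card S) = p}"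

definition supp :: "((nat \<Rightarrow> nat) \<Rightarrow> 'a::zero) \<Rightarrow> (nat \<Rightarrow> nat) set" where
  "supp f = {\<beta>. f \<beta> \<noteq> 0}"

lemma finite_card_subsets: "finite (card_subsets r p)"
  unfolding card_subsets_def by (rule finite_subset[of _ "Pow {..<r}"]) auto

lemma Lcarr_zero: "0 \<in> Lcarr r p"
  unfolding Lcarr_def by simp

lemma LcarrD:
  assumes "g \<in> Lcarr r p"
  shows "g S \<noteq> 0 \<Longrightarrow> S \<in> card_subsets r p" and "finite (supp (g S))"
    and "g S \<alpha> \<noteq> 0 \<Longrightarrow> expvec r \<alpha>" and "g S \<alpha> \<noteq> 0 \<Longrightarrow> i \<in> S \<Longrightarrow> 1 \<le> \<alpha> i"
  using assms unfolding Lcarr_def card_subsets_def supp_def by auto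

lemma Lcarr_supp_subset:
  assumes g: "g \<in> Lcarr r p" and g': "g' \<in> Lcarr r p"
    and h: "\<And>S. supp (h S) \<subseteq> supp (g S) \<union> supp (g' S)"
  shows "h \<in> Lcarr r p"
proof -
  have coeff: "h S \<alpha> \<noteq> 0 \<Longrightarrow> g S \<alpha> \<noteq> 0 \<or> g' S \<alpha> \<noteq> 0" for S \<alpha>
    using h[of S] by (auto simp: supp_def)
  have "h S \<noteq> 0 \<Longrightarrow> g S \<noteq> 0 \<or> g' S \<noteq> 0" for S
    using coeff[of S] by (auto simp: fun_eq_iff)
  then have "h S \<noteq> 0 \<Longrightarrow> S \<in> card_subsets r p" for S
    using LcarrD(1)[OF g] LcarrD(1)[OF g'] by blast
  moreover have "finite (supp (h S))" for S
    using h[of S] LcarrD(2)[OF g] LcarrD(2)[OF g'] by (meson finite_Un finite_subset)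
  ultimately show ?thesis
    using coeff LcarrD(3,4)[OF g] LcarrD(3,4)[OF g']
    unfolding Lcarr_def card_subsets_def supp_def by blast
qed

lemma Lcarr_add: "g \<in> Lcarr r p \<Longrightarrow> g' \<in> Lcarr r p \<Longrightarrow> g + g' \<in> Lcarr r p"
  by (erule Lcarr_supp_subset) (auto simp: supp_def)

lemma Lcarr_scale: "g \<in> Lcarr r p \<Longrightarrow> Lscale c g \<in> Lcarr r p"
  by (erule Lcarr_supp_subset[OF _ Lcarr_zero]) (auto simp: supp_def Lscale_def)

lemma Lcarr_sum: "finite I \<Longrightarrow> (\<And>i. i \<in> I \<Longrightarrow> g i \<in> Lcarr r p) \<Longrightarrow> (\<Sum>i\<in>I. g i) \<in> Lcarr r p"
  by (induction I rule: finite_induct) (auto intro: Lcarr_zero Lcarr_add)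

lemma Lcarr_Lmono:
  assumes "S \<in> card_subsets r p" and "expvec r \<beta>" and "\<forall>i\<in>S. 1 \<le> \<beta> i"
  shows "Lmono S \<beta> \<in> Lcarr r p"
proof -
  have component: "Lmono S \<beta> S' \<noteq> 0 \<Longrightarrow> S' = S" for S'
    by (auto simp: Lmono_def)
  have coeff: "Lmono S \<beta> S' \<alpha> \<noteq> 0 \<Longrightarrow> S' = S \<and> \<alpha> = \<beta>" for S' \<alpha>
    by (simp add: Lmono_def split: if_splits)
  have "finite {\<alpha>. Lmono S \<beta> S' \<alpha> \<noteq> 0}" for S'
    by (rule finite_subset[of _ "{\<beta>}"]) (auto simp: Lmono_def split: if_splits)
  then show ?thesis
    using assms unfolding Lcarr_def card_subsets_def by (auto dest: component coeff)
qed

lemma Lcarr_expansion: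
  assumes g: "g \<in> Lcarr r p"
  shows "g = (\<Sum>S\<in>card_subsets r p. \<Sum>\<beta>\<in>supp (g S). Lscale (g S \<beta>) (Lmono S \<beta>))"
proof (intro ext)
  fix S0 \<gamma>
  have inner: "(\<Sum>\<beta>\<in>supp (g S). Lscale (g S \<beta>) (Lmono S \<beta>) S0 \<gamma>) = (if S = S0 then g S0 \<gamma> else 0)" for S
  proof (cases "S = S0")
    case True
    then have "(\<Sum>\<beta>\<in>supp (g S). Lscale (g S \<beta>) (Lmono S \<beta>) S0 \<gamma>)
        = (\<Sum>\<beta>\<in>supp (g S). if \<beta> = \<gamma> then g S \<gamma> else 0)"
      by (intro sum.cong) (auto simp: Lscale_def Lmono_def)
    with True LcarrD(2)[OF g] show ?thesis by (simp add: supp_def)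
  qed (simp add: Lscale_def Lmono_def)
  have "g S0 \<noteq> 0 \<Longrightarrow> S0 \<in> card_subsets r p"
    by (rule LcarrD(1)[OF g])
  then have "g S0 \<gamma> = (\<Sum>S\<in>card_subsets r p. if S = S0 then g S0 \<gamma> else 0)"
    using finite_card_subsets by (cases "g S0 = 0") auto
  also have "\<dots> = (\<Sum>S\<in>card_subsets r p. \<Sum>\<beta>\<in>supp (g S). Lscale (g S \<beta>) (Lmono S \<beta>)) S0 \<gamma>"
    by (simp add: sum_apply inner)
  finally show "g S0 \<gamma> = \<dots>" .
qed

context r_complex
begin

lemma HomL_mem: "\<phi> \<in> carr (HomL r x X) n \<Longrightarrow> g \<in> Lcarr r p \<Longrightarrow> \<phi> p g \<in> carr X (p + n)"
  and HomL_vanish: "\<phi> \<in> carr (HomL r x X) n \<Longrightarrow> g \<notin> Lcarr r p \<Longrightarrow> \<phi> p g = 0"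
  and HomL_add: "\<phi> \<in> carr (HomL r x X) n \<Longrightarrow> g \<in> Lcarr r p \<Longrightarrow> g' \<in> Lcarr r p \<Longrightarrow>
    \<phi> p (g + g') = \<phi> p g + \<phi> p g'"
  and HomL_scale: "\<phi> \<in> carr (HomL r x X) n \<Longrightarrow> g \<in> Lcarr r p \<Longrightarrow> \<phi> p (Lscale c g) = smul X c (\<phi> p g)"
  unfolding HomL_def Lscale_def by auto

lemma HomL_mem_any: "\<phi> \<in> carr (HomL r x X) n \<Longrightarrow> \<phi> p g \<in> carr X (p + n)"
  using HomL_mem HomL_vanish carr_zero by metis

lemma HomL_sum:
  assumes \<phi>: "\<phi> \<in> carr (HomL r x X) n"
  shows "finite I \<Longrightarrow> (\<And>i. i \<in> I \<Longrightarrow> g i \<in> Lcarr r p) \<Longrightarrow> \<phi> p (\<Sum>i\<in>I. g i) = (\<Sum>i\<in>I. \<phi> p (g i))"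
proof (induction I rule: finite_induct)
  case empty
  have "\<phi> p 0 = \<phi> p 0 + \<phi> p 0"
    using HomL_add[OF \<phi> Lcarr_zero Lcarr_zero, of p] by (simp only: add_0_right)
  then have "\<phi> p 0 = 0" by simp
  then show ?case by (simp only: sum.empty)
next
  case (insert a A)
  then have "\<phi> p (g a + sum g A) = \<phi> p (g a) + \<phi> p (sum g A)"
    by (intro HomL_add[OF \<phi>] Lcarr_sum) auto
  moreover have "\<phi> p (sum g A) = (\<Sum>i\<in>A. \<phi> p (g i))"
    using insert by blast
  ultimately show ?case by (simp only: sum.insert[OF insert(1,2)])
qed

end

definition Lpair :: "('a::comm_ring_1, 'm::ab_group_add) cpx \<Rightarrow> nat \<Rightarrow> int
    \<Rightarrow> (nat set \<Rightarrow> (nat \<Rightarrow> nat) \<Rightarrow> 'm) \<Rightarrow> (nat set \<Rightarrow> (nat \<Rightarrow> nat) \<Rightarrow> 'a) \<Rightarrow> 'm" where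
  "Lpair X r p y g = (\<Sum>S\<in>card_subsets r p. \<Sum>\<beta>\<in>supp (g S). smul X (g S \<beta>) (y S \<beta>))"

context r_complex
begin

lemma sum_supp_smul_extend:
  assumes "finite B" and "supp f \<subseteq> B" and "\<And>\<beta>. y \<beta> \<in> carr X m"
  shows "(\<Sum>\<beta>\<in>supp f. smul X (f \<beta>) (y \<beta>)) = (\<Sum>\<beta>\<in>B. smul X (f \<beta>) (y \<beta>))"
  by (rule sum.mono_neutral_left) (use assms smul_zero_left in \<open>auto simp: supp_def\<close>)

context
  fixes r p m and y :: "nat set \<Rightarrow> (nat \<Rightarrow> nat) \<Rightarrow> 'm"
  assumes y: "\<And>S \<beta>. S \<in> card_subsets r p \<Longrightarrow> y S \<beta> \<in> carr X m"
begin

lemma Lpair_mem: "g \<in> Lcarr r p \<Longrightarrow> Lpair X r p y g \<in> carr X m"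
  unfolding Lpair_def using finite_card_subsets LcarrD(2)
  by (auto intro!: carr_sum carr_smul y)

lemma Lpair_add:
  assumes g: "g \<in> Lcarr r p" and g': "g' \<in> Lcarr r p"
  shows "Lpair X r p y (g + g') = Lpair X r p y g + Lpair X r p y g'"
proof -
  have "(\<Sum>\<beta>\<in>supp ((g + g') S). smul X ((g + g') S \<beta>) (y S \<beta>)) =
      (\<Sum>\<beta>\<in>supp (g S). smul X (g S \<beta>) (y S \<beta>)) + (\<Sum>\<beta>\<in>supp (g' S). smul X (g' S \<beta>) (y S \<beta>))"
    if S: "S \<in> card_subsets r p" for S
  proof -
    let ?B = "supp (g S) \<union> supp (g' S)"
    have B: "finite ?B"
      using LcarrD(2)[OF g] LcarrD(2)[OF g'] by simp
    have "(\<Sum>\<beta>\<in>supp ((g + g') S). smul X ((g + g') S \<beta>) (y S \<beta>))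
        = (\<Sum>\<beta>\<in>?B. smul X (g S \<beta>) (y S \<beta>) + smul X (g' S \<beta>) (y S \<beta>))"
      by (subst sum_supp_smul_extend[OF B _ y[OF S]]) (auto simp: supp_def smul_add_left[OF y[OF S]])
    also have "\<dots> = (\<Sum>\<beta>\<in>?B. smul X (g S \<beta>) (y S \<beta>)) + (\<Sum>\<beta>\<in>?B. smul X (g' S \<beta>) (y S \<beta>))"
      by (rule sum.distrib)
    also have "\<dots> = (\<Sum>\<beta>\<in>supp (g S). smul X (g S \<beta>) (y S \<beta>)) + (\<Sum>\<beta>\<in>supp (g' S). smul X (g' S \<beta>) (y S \<beta>))"
      using sum_supp_smul_extend[OF B _ y[OF S], of "g S"] sum_supp_smul_extend[OF B _ y[OF S], of "g' S"]
      by auto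
    finally show ?thesis .
  qed
  then show ?thesis
    unfolding Lpair_def sum.distrib[symmetric] by (rule sum.cong[OF refl])
qed

lemma Lpair_scale:
  assumes g: "g \<in> Lcarr r p"
  shows "Lpair X r p y (Lscale c g) = smul X c (Lpair X r p y g)"
proof -
  have "(\<Sum>\<beta>\<in>supp (Lscale c g S). smul X (Lscale c g S \<beta>) (y S \<beta>)) =
      smul X c (\<Sum>\<beta>\<in>supp (g S). smul X (g S \<beta>) (y S \<beta>))"
    if S: "S \<in> card_subsets r p" for S
  proof -
    have "(\<Sum>\<beta>\<in>supp (Lscale c g S). smul X (Lscale c g S \<beta>) (y S \<beta>))
        = (\<Sum>\<beta>\<in>supp (g S). smul X c (smul X (g S \<beta>) (y S \<beta>)))"
      by (subst sum_supp_smul_extend[OF LcarrD(2)[OF g] _ y[OF S]])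
        (auto simp: supp_def Lscale_def smul_mult[OF y[OF S]])
    also have "\<dots> = smul X c (\<Sum>\<beta>\<in>supp (g S). smul X (g S \<beta>) (y S \<beta>))"
      by (rule smul_sum[OF LcarrD(2)[OF g], symmetric]) (rule carr_smul[OF y[OF S]])
    finally show ?thesis .
  qed
  then have "Lpair X r p y (Lscale c g)
      = (\<Sum>S\<in>card_subsets r p. smul X c (\<Sum>\<beta>\<in>supp (g S). smul X (g S \<beta>) (y S \<beta>)))"
    unfolding Lpair_def by (rule sum.cong[OF refl])
  also have "\<dots> = smul X c (Lpair X r p y g)"
    unfolding Lpair_def using LcarrD(2)[OF g]
    by (intro smul_sum[OF finite_card_subsets, where n=m, symmetric] carr_sum carr_smul y)
  finally show ?thesis .
qed

lemma Lpair_Lmono: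
  assumes S: "S \<in> card_subsets r p"
  shows "Lpair X r p y (Lmono S \<beta>) = y S \<beta>"
proof -
  have "(\<Sum>\<beta>'\<in>supp (Lmono S \<beta> S'). smul X (Lmono S \<beta> S' \<beta>') (y S' \<beta>')) = (if S' = S then y S \<beta> else 0)"
    if S': "S' \<in> card_subsets r p" for S'
  proof (cases "S' = S")
    case True
    have "(\<Sum>\<beta>'\<in>supp (Lmono S \<beta> S'). smul X (Lmono S \<beta> S' \<beta>') (y S' \<beta>'))
        = smul X (Lmono S \<beta> S' \<beta>) (y S' \<beta>)"
      by (rule sum_eq_single) (auto simp: supp_def Lmono_def True)
    also have "\<dots> = y S \<beta>"
      using True by (simp add: Lmono_def smul_one[OF y[OF S]])
    finally show ?thesis
      using True by simp
  qed (simp add: supp_def Lmono_def)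
  then have "Lpair X r p y (Lmono S \<beta>) = (\<Sum>S'\<in>card_subsets r p. if S' = S then y S \<beta> else 0)"
    unfolding Lpair_def by (rule sum.cong[OF refl])
  also have "\<dots> = y S \<beta>"
    using S finite_card_subsets by simp
  finally show ?thesis .
qed

end

lemma HomL_eq_Lpair:
  assumes \<phi>: "\<phi> \<in> carr (HomL r x X) n" and g: "g \<in> Lcarr r p"
  shows "\<phi> p g = Lpair X r p (\<lambda>S \<beta>. \<phi> p (Lmono S \<beta>)) g"
proof -
  have mono: "S \<in> card_subsets r p \<Longrightarrow> \<beta> \<in> supp (g S) \<Longrightarrow> Lmono S \<beta> \<in> Lcarr r p" for S \<beta>
    using LcarrD[OF g] by (intro Lcarr_Lmono) (auto simp: supp_def)
  have "\<phi> p g = \<phi> p (\<Sum>S\<in>card_subsets r p. \<Sum>\<beta>\<in>supp (g S). Lscale (g S \<beta>) (Lmono S \<beta>))"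
    by (subst Lcarr_expansion[OF g]) (rule refl)
  also have "\<dots> = (\<Sum>S\<in>card_subsets r p. \<Sum>\<beta>\<in>supp (g S). \<phi> p (Lscale (g S \<beta>) (Lmono S \<beta>)))"
    using LcarrD(2)[OF g] mono
    by (subst HomL_sum[OF \<phi> finite_card_subsets])
      (auto intro!: Lcarr_sum Lcarr_scale sum.cong HomL_sum[OF \<phi>])
  also have "\<dots> = Lpair X r p (\<lambda>S \<beta>. \<phi> p (Lmono S \<beta>)) g"
    unfolding Lpair_def by (auto intro!: sum.cong HomL_scale[OF \<phi>] mono)
  finally show ?thesis .
qed

end

definition kos_sign :: "nat \<Rightarrow> int \<Rightarrow> 'b::ab_group_add \<Rightarrow> 'b" where
  "kos_sign k n y = (if even (int k * n + int (k * (k + 1) div 2)) then y else - y)"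

definition shift :: "nat set \<Rightarrow> (nat \<Rightarrow> nat) \<Rightarrow> nat \<Rightarrow> nat" where
  "shift S \<alpha> = (\<lambda>k. if k \<in> S then Suc (\<alpha> k) else \<alpha> k)"

definition unshift :: "nat set \<Rightarrow> (nat \<Rightarrow> nat) \<Rightarrow> nat \<Rightarrow> nat" where
  "unshift S \<beta> = (\<lambda>k. if k \<in> S then \<beta> k - 1 else \<beta> k)"

definition to_koszul :: "nat \<Rightarrow> int \<Rightarrow> (int \<Rightarrow> (nat set \<Rightarrow> (nat \<Rightarrow> nat) \<Rightarrow> 'a::comm_ring_1) \<Rightarrow> 'm::ab_group_add)
    \<Rightarrow> nat set \<Rightarrow> (nat \<Rightarrow> nat) \<Rightarrow> 'm" where
  "to_koszul r n \<phi> S \<alpha> =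
    (if S \<subseteq> {..<r} \<and> expvec r \<alpha> then kos_sign (card S) n (\<phi> (int (card S)) (Lmono S (shift S \<alpha>))) else 0)"

definition of_koszul :: "nat \<Rightarrow> ('a::comm_ring_1, 'm::ab_group_add) cpx \<Rightarrow> int
    \<Rightarrow> (nat set \<Rightarrow> (nat \<Rightarrow> nat) \<Rightarrow> 'm) \<Rightarrow> int \<Rightarrow> (nat set \<Rightarrow> (nat \<Rightarrow> nat) \<Rightarrow> 'a) \<Rightarrow> 'm" where
  "of_koszul r X n h p g =
    (if g \<in> Lcarr r p then Lpair X r p (\<lambda>S \<beta>. kos_sign (card S) n (h S (unshift S \<beta>))) g else 0)"

lemma kos_sign_kos_sign [simp]: "kos_sign k n (kos_sign k n y) = y"
  by (simp add: kos_sign_def)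

lemma kos_sign_add: "kos_sign k n (a + b) = kos_sign k n a + kos_sign k n b"
  by (simp add: kos_sign_def)

lemma unshift_shift [simp]: "unshift S (shift S \<alpha>) = \<alpha>"
  by (simp add: unshift_def shift_def fun_eq_iff)

lemma shift_unshift: "\<forall>i\<in>S. 1 \<le> \<beta> i \<Longrightarrow> shift S (unshift S \<beta>) = \<beta>"
  by (auto simp add: unshift_def shift_def fun_eq_iff)

lemma expvec_shift: "S \<subseteq> {..<r} \<Longrightarrow> expvec r \<alpha> \<Longrightarrow> expvec r (shift S \<alpha>)"
  by (auto simp add: expvec_def shift_def)

lemma expvec_unshift: "expvec r \<beta> \<Longrightarrow> expvec r (unshift S \<beta>)"
  by (auto simp add: expvec_def unshift_def)

lemma Lcarr_Lmono_shift: "S \<subseteq> {..<r} \<Longrightarrow> expvec r \<alpha> \<Longrightarrow> Lmono S (shift S \<alpha>) \<in> Lcarr r (int (card S))"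
  by (intro Lcarr_Lmono expvec_shift) (auto simp: card_subsets_def shift_def)

lemma HomL_carr_iff: "\<phi> \<in> carr (HomL r x X) n \<longleftrightarrow> (\<forall>p.
      (\<forall>g\<in>Lcarr r p. \<phi> p g \<in> carr X (p + n))
    \<and> (\<forall>g. g \<notin> Lcarr r p \<longrightarrow> \<phi> p g = 0)
    \<and> (\<forall>g\<in>Lcarr r p. \<forall>g'\<in>Lcarr r p. \<phi> p (g + g') = \<phi> p g + \<phi> p g')
    \<and> (\<forall>c. \<forall>g\<in>Lcarr r p. \<phi> p (\<lambda>S \<alpha>. c * g S \<alpha>) = smul X c (\<phi> p g)))"
  unfolding HomL_def by simp

lemma KosX_carr_iff: "h \<in> carr (KosX r x X) n \<longleftrightarrow> (\<forall>S \<alpha>.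
    if S \<subseteq> {..<r} \<and> expvec r \<alpha> then h S \<alpha> \<in> carr X (n + int (card S)) else h S \<alpha> = 0)"
  unfolding KosX_def by simp

lemma to_koszul_add: "to_koszul r n (\<phi> + \<phi>') = to_koszul r n \<phi> + to_koszul r n \<phi>'"
  by (simp add: to_koszul_def fun_eq_iff kos_sign_add)

context r_complex
begin

lemma carr_kos_sign: "y \<in> carr X m \<Longrightarrow> kos_sign k n y \<in> carr X m"
  by (simp add: kos_sign_def carr_uminus)

lemma smul_kos_sign: "y \<in> carr X m \<Longrightarrow> smul X c (kos_sign k n y) = kos_sign k n (smul X c y)"
  by (simp add: kos_sign_def smul_uminus_right)

lemma KosX_mem: "h \<in> carr (KosX r x X) n \<Longrightarrow> S \<subseteq> {..<r} \<Longrightarrow> h S \<alpha> \<in> carr X (n + int (card S))"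
  unfolding KosX_carr_iff by (metis carr_zero)

lemma KosX_vanish: "h \<in> carr (KosX r x X) n \<Longrightarrow> \<not> (S \<subseteq> {..<r} \<and> expvec r \<alpha>) \<Longrightarrow> h S \<alpha> = 0"
  unfolding KosX_carr_iff by metis

lemma to_koszul_mem:
  assumes \<phi>: "\<phi> \<in> carr (HomL r x X) n"
  shows "to_koszul r n \<phi> \<in> carr (KosX r x X) n"
  unfolding KosX_carr_iff to_koszul_def
  using HomL_mem[OF \<phi> Lcarr_Lmono_shift] by (auto simp: add.commute carr_kos_sign)

lemma to_koszul_smul:
  assumes \<phi>: "\<phi> \<in> carr (HomL r x X) n"
  shows "to_koszul r n (smul (HomL r x X) c \<phi>) = smul (KosX r x X) c (to_koszul r n \<phi>)"
  by (simp add: fun_eq_iff to_koszul_def HomL_def KosX_def smul_kos_sign[OF HomL_mem_any[OF \<phi>]]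
      smul_zero_right)

lemma of_koszul_coeff_mem: "h \<in> carr (KosX r x X) n \<Longrightarrow> S \<in> card_subsets r p \<Longrightarrow>
    kos_sign (card S) n (h S (unshift S \<beta>)) \<in> carr X (p + n)"
  using KosX_mem[of h r x n S] by (auto simp: card_subsets_def add.commute intro: carr_kos_sign)

lemma of_koszul_mem:
  assumes h: "h \<in> carr (KosX r x X) n"
  shows "of_koszul r X n h \<in> carr (HomL r x X) n"
  unfolding HomL_carr_iff
proof (intro allI conjI ballI impI)
  fix p
  note coeff = of_koszul_coeff_mem[OF h, where p=p]
  show "of_koszul r X n h p g \<in> carr X (p + n)" if "g \<in> Lcarr r p" for g
    using that by (simp add: of_koszul_def Lpair_mem[OF coeff])
  show "of_koszul r X n h p g = 0" if "g \<notin> Lcarr r p" for g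
    using that by (simp add: of_koszul_def)
  show "of_koszul r X n h p (g + g') = of_koszul r X n h p g + of_koszul r X n h p g'"
    if "g \<in> Lcarr r p" and "g' \<in> Lcarr r p" for g g'
    using that by (simp add: of_koszul_def Lcarr_add Lpair_add[OF coeff])
  show "of_koszul r X n h p (\<lambda>S \<alpha>. c * g S \<alpha>) = smul X c (of_koszul r X n h p g)"
    if "g \<in> Lcarr r p" for c g
    using that Lcarr_scale[OF that] Lpair_scale[OF coeff that]
    by (simp add: of_koszul_def Lscale_def)
qed

lemma to_koszul_of_koszul:
  assumes h: "h \<in> carr (KosX r x X) n"
  shows "to_koszul r n (of_koszul r X n h) = h"
proof (intro ext)
  fix S \<alpha>
  show "to_koszul r n (of_koszul r X n h) S \<alpha> = h S \<alpha>"
  proof (cases "S \<subseteq> {..<r} \<and> expvec r \<alpha>")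
    case True
    then have "S \<in> card_subsets r (int (card S))"
      by (simp add: card_subsets_def)
    with True show ?thesis
      by (simp add: to_koszul_def of_koszul_def Lcarr_Lmono_shift Lpair_Lmono[OF of_koszul_coeff_mem[OF h]])
  next
    case False
    then show ?thesis
      using KosX_vanish[OF h False] by (auto simp: to_koszul_def)
  qed
qed

lemma of_koszul_to_koszul:
  assumes \<phi>: "\<phi> \<in> carr (HomL r x X) n"
  shows "of_koszul r X n (to_koszul r n \<phi>) = \<phi>"
proof (intro ext)
  fix p g
  show "of_koszul r X n (to_koszul r n \<phi>) p g = \<phi> p g"
  proof (cases "g \<in> Lcarr r p")
    case g: True
    have "to_koszul r n \<phi> S (unshift S \<beta>) = kos_sign (card S) n (\<phi> p (Lmono S \<beta>))"
      if "S \<in> card_subsets r p" and "\<beta> \<in> supp (g S)" for S \<beta>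
      using that LcarrD(3,4)[OF g]
      by (auto simp: to_koszul_def card_subsets_def supp_def expvec_unshift shift_unshift)
    then have "of_koszul r X n (to_koszul r n \<phi>) p g = Lpair X r p (\<lambda>S \<beta>. \<phi> p (Lmono S \<beta>)) g"
      unfolding of_koszul_def Lpair_def using g by (auto intro!: sum.cong)
    with HomL_eq_Lpair[OF \<phi> g] show ?thesis by simp
  qed (simp add: of_koszul_def HomL_vanish[OF \<phi>])
qed

lemma bij_betw_to_koszul: "bij_betw (to_koszul r n) (carr (HomL r x X) n) (carr (KosX r x X) n)"
  by (rule bij_betw_byWitness[where f'="of_koszul r X n"])
    (auto simp: of_koszul_to_koszul to_koszul_of_koszul to_koszul_mem of_koszul_mem)

end

definition Ldiff_term :: "(nat \<Rightarrow> 'a::comm_ring_1) \<Rightarrow> nat set \<Rightarrow> (nat \<Rightarrow> nat) \<Rightarrow> nat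
    \<Rightarrow> nat set \<Rightarrow> (nat \<Rightarrow> nat) \<Rightarrow> 'a" where
  "Ldiff_term x T \<beta> i =
    Lscale ((- 1) ^ card {j\<in>T. j < i} * x i) (Lmono (insert i T) (\<beta>(i := Suc (\<beta> i))))
    + (if 0 < \<beta> i then Lscale (- ((- 1) ^ card {j\<in>T. j < i})) (Lmono (insert i T) \<beta>) else 0)"

lemma mulU_indicator:
  "mulU i (\<lambda>\<gamma>. if \<gamma> = \<beta> then c else 0) \<gamma> = (if \<gamma> = \<beta>(i := Suc (\<beta> i)) then c else 0)"
proof (cases "\<gamma> i = 0")
  case False
  then have "\<gamma>(i := \<gamma> i - 1) = \<beta> \<longleftrightarrow> \<gamma> = \<beta>(i := Suc (\<beta> i))"
    by (auto simp: fun_eq_iff)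
  with False show ?thesis by (simp add: mulU_def)
qed (auto simp: mulU_def)

lemma psi_indicator:
  "psi xi i (\<lambda>\<gamma>. if \<gamma> = \<beta> then 1 else 0) \<gamma> =
    (if \<gamma> = \<beta>(i := Suc (\<beta> i)) then xi else 0) + (if \<gamma> = \<beta> \<and> 0 < \<beta> i then - 1 else 0)"
proof -
  have "\<beta> \<noteq> \<beta>(i := Suc (\<beta> i))"
    by (auto simp: fun_eq_iff)
  then show ?thesis
    by (cases "\<gamma> = \<beta>"; cases "\<gamma> = \<beta>(i := Suc (\<beta> i))") (auto simp: psi_def mulU_indicator atzero_def)
qed

lemma psi_zero: "psi xi i 0 = 0"
  by (simp add: psi_def atzero_def mulU_def fun_eq_iff)

lemma sg_zero: "sg k 0 = 0"
  by (simp add: sg_def)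

lemma sg_apply: "sg k f \<alpha> = sg k (f \<alpha>)"
  by (simp add: sg_def)

lemma Ldiff_term_insert:
  shows "Ldiff_term x T \<beta> i (insert i T) = sg (card {j\<in>T. j < i}) (psi (x i) i (Lmono T \<beta> T))"
proof (intro ext)
  fix \<gamma>
  let ?c = "card {j\<in>T. j < i}"
  have "Ldiff_term x T \<beta> i (insert i T) \<gamma> = (- 1) ^ ?c * ((if \<gamma> = \<beta>(i := Suc (\<beta> i)) then x i else 0)
      + (if \<gamma> = \<beta> \<and> 0 < \<beta> i then - 1 else 0))"
    by (simp add: Ldiff_term_def Lscale_def Lmono_def algebra_simps)
  also have "\<dots> = sg ?c (psi (x i) i (\<lambda>\<gamma>. if \<gamma> = \<beta> then 1 else 0)) \<gamma>"
    unfolding psi_indicator by (simp add: sg_def minus_one_power_iff)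
  also have "(\<lambda>\<gamma>. if \<gamma> = \<beta> then 1 else 0) = Lmono T \<beta> T"
    by (simp add: Lmono_def)
  finally show "Ldiff_term x T \<beta> i (insert i T) \<gamma> = sg ?c (psi (x i) i (Lmono T \<beta> T)) \<gamma>" .
qed

lemma Ldiff_term_other: "T' \<noteq> insert i T \<Longrightarrow> Ldiff_term x T \<beta> i T' = 0"
  by (simp add: Ldiff_term_def Lscale_def Lmono_def fun_eq_iff)

lemma Lmono_apply_other: "T' \<noteq> T \<Longrightarrow> Lmono T \<beta> T' = 0"
  by (simp add: Lmono_def fun_eq_iff)

lemma Ldiff_Lmono:
  assumes T: "T \<subseteq> {..<r}"
  shows "Ldiff r x (Lmono T \<beta>) = (\<Sum>i\<in>{..<r} - T. Ldiff_term x T \<beta> i)"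
proof (intro ext)
  fix T' \<gamma>
  have rhs: "(\<Sum>i\<in>{..<r} - T. Ldiff_term x T \<beta> i) T' = (\<Sum>i\<in>{..<r} - T. Ldiff_term x T \<beta> i T')"
    by (rule sum_apply)
  show "Ldiff r x (Lmono T \<beta>) T' \<gamma> = (\<Sum>i\<in>{..<r} - T. Ldiff_term x T \<beta> i) T' \<gamma>"
  proof (cases "\<exists>i\<in>{..<r} - T. T' = insert i T")
    case True
    then obtain i where i: "i \<in> {..<r} - T" and T': "T' = insert i T"
      by blast
    have T'r: "T' \<subseteq> {..<r}"
      using T i T' by auto
    have "Ldiff r x (Lmono T \<beta>) T' = (\<Sum>j\<in>T'. sg (card {k\<in>T'. k < j}) (psi (x j) j (Lmono T \<beta> (T' - {j}))))"
      using T'r by (simp add: Ldiff_def)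
    also have "\<dots> = sg (card {j\<in>T'. j < i}) (psi (x i) i (Lmono T \<beta> (T' - {i})))"
    proof (rule sum_eq_single)
      show "finite T'" and "i \<in> T'"
        using T'r T' finite_subset by auto
      show "sg (card {k\<in>T'. k < j}) (psi (x j) j (Lmono T \<beta> (T' - {j}))) = 0" if "j \<in> T'" "j \<noteq> i" for j
      proof -
        have "T' - {j} \<noteq> T"
          using that i T' by auto
        then show ?thesis by (simp add: Lmono_apply_other psi_zero sg_zero)
      qed
    qed
    also have "\<dots> = Ldiff_term x T \<beta> i T'"
    proof -
      have "{j\<in>T'. j < i} = {j\<in>T. j < i}" and "T' - {i} = T"
        using T' i by auto
      with i T' show ?thesis
        by (simp add: Ldiff_term_insert)
    qed
    also have "\<dots> = (\<Sum>i\<in>{..<r} - T. Ldiff_term x T \<beta> i) T'"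
      unfolding rhs using i T' by (intro sum_eq_single[symmetric]) (auto intro: Ldiff_term_other)
    finally show ?thesis by simp
  next
    case False
    have "T' - {j} \<noteq> T" if "T' \<subseteq> {..<r}" and "j \<in> T'" for j
      using False that by (metis DiffD2 Diff_iff insert_Diff insertI1 subsetD)
    then have "Ldiff r x (Lmono T \<beta>) T' = 0"
      unfolding Ldiff_def
      by (auto intro!: sum.neutral simp: Lmono_apply_other psi_zero sg_zero)
    moreover have "(\<Sum>i\<in>{..<r} - T. Ldiff_term x T \<beta> i) T' = 0"
      unfolding rhs using False by (auto intro!: sum.neutral Ldiff_term_other)
    ultimately show ?thesis by simp
  qed
qed

lemma even_kos_exponent_succ_degree: "even (int p * (n + 1) + int (p * (p + 1) div 2)) \<longleftrightarrow>
    (even (int p * n + int (p * (p + 1) div 2)) \<longleftrightarrow> even p)"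
proof -
  have "int p * (n + 1) + int (p * (p + 1) div 2) = (int p * n + int (p * (p + 1) div 2)) + int p"
    by (simp add: algebra_simps)
  moreover have "even (A + int p) \<longleftrightarrow> (even A \<longleftrightarrow> even p)" for A :: int
    by simp
  ultimately show ?thesis by metis
qed

lemma even_kos_exponent_Suc: "even (int (Suc p) * n + int (Suc p * (Suc p + 1) div 2)) \<longleftrightarrow>
    (even (int p * (n + 1) + int (p * (p + 1) div 2)) \<longleftrightarrow> even (n + 1))"
proof -
  have "Suc p * (Suc p + 1) div 2 = p * (p + 1) div 2 + (p + 1)"
  proof -
    have "Suc p * (Suc p + 1) = p * (p + 1) + 2 * (p + 1)"
      by (simp add: algebra_simps)
    then show ?thesis by simp
  qed
  then have "int (Suc p) * n + int (Suc p * (Suc p + 1) div 2)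
      = (int p * (n + 1) + int (p * (p + 1) div 2)) + (n + 1)"
    by (simp add: algebra_simps)
  moreover have "even (A + (n + 1)) \<longleftrightarrow> (even A \<longleftrightarrow> even (n + 1))" for A :: int
    by simp
  ultimately show ?thesis by metis
qed

lemma kos_sign_succ_degree: "kos_sign p (n + 1) y = sg p (kos_sign p n y)"
  unfolding kos_sign_def sg_def even_kos_exponent_succ_degree by auto

lemma HomL_diff_apply: "diff (HomL r x X) n \<phi> p g = (if g \<in> Lcarr r p then diff X (p + n) (\<phi> p g)
    - (if even n then \<phi> (p + 1) (Ldiff r x g) else - \<phi> (p + 1) (Ldiff r x g)) else 0)"
  by (simp add: HomL_def)

lemma KosX_diff_apply: "diff (KosX r x X) n h T \<alpha> = (if T \<subseteq> {..<r} then
    (\<Sum>i\<in>{..<r} - T. sg (card {j\<in>T. j < i}) (smul X (x i) (h (insert i T) \<alpha>) - mulU i (h (insert i T)) \<alpha>))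
    + sg (card T) (if expvec r \<alpha> then diff X (n + int (card T)) (h T \<alpha>) else 0) else 0)"
  by (simp add: KosX_def sum_apply sg_apply mulT_def)

context r_complex
begin

lemma KosX_diff_vanish:
  assumes h: "h \<in> carr (KosX r x X) n" and \<alpha>: "\<not> expvec r \<alpha>"
  shows "diff (KosX r x X) n h T \<alpha> = 0"
proof -
  have "\<not> expvec r (\<alpha>(i := \<alpha> i - 1))" if "i < r" for i
    using \<alpha> that by (auto simp: expvec_def)
  then have "smul X (x i) (h (insert i T) \<alpha>) - mulU i (h (insert i T)) \<alpha> = 0" if "i < r" for i
    using \<alpha> that by (simp add: mulU_def KosX_vanish[OF h] smul_zero_right)
  with \<alpha> show ?thesis
    by (simp add: KosX_diff_apply sg_zero)
qed

lemma kos_sign_differential: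
  "a \<in> carr X (int p + n) \<Longrightarrow>
    kos_sign p (n + 1) (diff X (int p + n) a) = sg p (diff X (n + int p) (kos_sign p n a))"
  unfolding kos_sign_succ_degree by (simp add: kos_sign_def differential_uminus add.commute)

lemma Lcarr_Lmono_insert:
  assumes "T \<subseteq> {..<r}" and "i \<in> {..<r} - T" and "expvec r \<beta>" and "\<forall>j\<in>T. 1 \<le> \<beta> j"
  shows "Lmono (insert i T) (\<beta>(i := Suc (\<beta> i))) \<in> Lcarr r (int (card T) + 1)"
    and "0 < \<beta> i \<Longrightarrow> Lmono (insert i T) \<beta> \<in> Lcarr r (int (card T) + 1)"
  using assms finite_subset[OF assms(1)]
  by (auto intro!: Lcarr_Lmono simp: card_subsets_def expvec_def)

lemma HomL_Ldiff_Lmono: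
  assumes \<phi>: "\<phi> \<in> carr (HomL r x X) n" and T: "T \<subseteq> {..<r}"
    and \<beta>: "expvec r \<beta>" "\<forall>j\<in>T. 1 \<le> \<beta> j"
  shows "\<phi> (int (card T) + 1) (Ldiff r x (Lmono T \<beta>)) = (\<Sum>i\<in>{..<r} - T.
      smul X ((- 1) ^ card {j\<in>T. j < i} * x i) (\<phi> (int (card T) + 1) (Lmono (insert i T) (\<beta>(i := Suc (\<beta> i)))))
    + (if 0 < \<beta> i then smul X (- ((- 1) ^ card {j\<in>T. j < i})) (\<phi> (int (card T) + 1) (Lmono (insert i T) \<beta>))
       else 0))" (is "_ = (\<Sum>i\<in>_. ?term i)")
proof -
  note mono = Lcarr_Lmono_insert[OF T _ \<beta>]
  have terms: "Ldiff_term x T \<beta> i \<in> Lcarr r (int (card T) + 1)" if "i \<in> {..<r} - T" for i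
    unfolding Ldiff_term_def using mono[OF that] by (auto intro!: Lcarr_add Lcarr_scale Lcarr_zero)
  have "\<phi> (int (card T) + 1) (Ldiff r x (Lmono T \<beta>))
      = (\<Sum>i\<in>{..<r} - T. \<phi> (int (card T) + 1) (Ldiff_term x T \<beta> i))"
    unfolding Ldiff_Lmono[OF T] by (rule HomL_sum[OF \<phi>]) (use terms in auto)
  also have "\<dots> = (\<Sum>i\<in>{..<r} - T. ?term i)"
  proof (rule sum.cong[OF refl])
    fix i assume i: "i \<in> {..<r} - T"
    show "\<phi> (int (card T) + 1) (Ldiff_term x T \<beta> i) = ?term i"
    proof (cases "0 < \<beta> i")
      case True
      then show ?thesis
        using mono[OF i] HomL_add[OF \<phi> Lcarr_scale Lcarr_scale] HomL_scale[OF \<phi>]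
        by (simp add: Ldiff_term_def)
    next
      case False
      then show ?thesis
        using mono(1)[OF i] HomL_scale[OF \<phi>] by (simp add: Ldiff_term_def)
    qed
  qed
  finally show ?thesis .
qed

end

lemma kos_sign_diff_sum: "kos_sign k m (a - (if e then sum t I else - sum t I)) =
    kos_sign k m a + (\<Sum>i\<in>I. kos_sign k m (- (if e then t i else - t i)))"
  by (cases e) (simp_all add: kos_sign_def sum_negf)

lemma to_koszul_insert:
  assumes T: "T \<subseteq> {..<r}" and i: "i \<in> {..<r} - T" and \<alpha>: "expvec r \<alpha>"
  shows "to_koszul r n \<phi> (insert i T) \<alpha>
    = kos_sign (Suc (card T)) n (\<phi> (int (card T) + 1) (Lmono (insert i T) ((shift T \<alpha>)(i := Suc (shift T \<alpha> i)))))"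
proof -
  have "shift (insert i T) \<alpha> = (shift T \<alpha>)(i := Suc (shift T \<alpha> i))"
    using i by (auto simp: shift_def fun_eq_iff)
  with T i \<alpha> finite_subset[OF T] show ?thesis
    by (simp add: to_koszul_def add.commute)
qed

lemma mulU_to_koszul_insert:
  assumes T: "T \<subseteq> {..<r}" and i: "i \<in> {..<r} - T" and \<alpha>: "expvec r \<alpha>"
  shows "mulU i (to_koszul r n \<phi> (insert i T)) \<alpha> = (if 0 < shift T \<alpha> i
    then kos_sign (Suc (card T)) n (\<phi> (int (card T) + 1) (Lmono (insert i T) (shift T \<alpha>))) else 0)"
proof (cases "\<alpha> i = 0")
  case False
  have "shift (insert i T) (\<alpha>(i := \<alpha> i - 1)) = shift T \<alpha>"
    using i False by (auto simp: shift_def fun_eq_iff)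
  moreover have "expvec r (\<alpha>(i := \<alpha> i - 1))"
    using \<alpha> by (auto simp: expvec_def)
  ultimately show ?thesis
    using T i False finite_subset[OF T] by (simp add: mulU_def to_koszul_def shift_def add.commute)
qed (use i in \<open>simp add: mulU_def shift_def\<close>)

context r_complex
begin

lemma kos_sign_dual_Ldiff_term:
  assumes B: "B \<in> carr X q" and C: "C \<in> carr X q"
  shows "kos_sign p (n + 1) (- (if even n
        then smul X ((- 1) ^ c * xi) B + (if b then smul X (- ((- 1) ^ c)) C else 0)
        else - (smul X ((- 1) ^ c * xi) B + (if b then smul X (- ((- 1) ^ c)) C else 0))))
    = sg c (smul X xi (kos_sign (Suc p) n B) - (if b then kos_sign (Suc p) n C else 0))"
proof -
  have s1: "smul X ((- 1) ^ c * xi) B = (if even c then smul X xi B else - smul X xi B)"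
    by (simp add: minus_one_power_iff smul_uminus_left[OF B])
  have s2: "smul X (- ((- 1) ^ c)) C = (if even c then - C else C)"
    by (simp add: minus_one_power_iff smul_uminus_left[OF C] smul_one[OF C])
  define E where "E = even (int p * (n + 1) + int (p * (p + 1) div 2))"
  have e1: "kos_sign p (n + 1) y = (if E then y else - y)" for y :: 'm
    by (simp add: kos_sign_def E_def)
  have e2: "kos_sign (Suc p) n y = (if (E \<longleftrightarrow> even (n + 1)) then y else - y)" for y :: 'm
    unfolding kos_sign_def E_def even_kos_exponent_Suc by (rule refl)
  show ?thesis
    unfolding s1 s2 smul_kos_sign[OF B] e1 e2 sg_def
    by (cases E; cases "even n"; cases "even c"; cases b) (simp_all add: smul_uminus_right[OF B] algebra_simps)
qed

lemma to_koszul_diff_coeff: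
  assumes \<phi>: "\<phi> \<in> carr (HomL r x X) n" and T: "T \<subseteq> {..<r}" and \<alpha>: "expvec r \<alpha>"
  shows "to_koszul r (n + 1) (diff (HomL r x X) n \<phi>) T \<alpha> = diff (KosX r x X) n (to_koszul r n \<phi>) T \<alpha>"
proof -
  define p where "p = card T"
  define \<beta> where "\<beta> = shift T \<alpha>"
  define c where "c i = card {j\<in>T. j < i}" for i
  have \<beta>: "expvec r \<beta>" "\<forall>j\<in>T. 1 \<le> \<beta> j"
    using expvec_shift[OF T \<alpha>] by (simp_all add: \<beta>_def shift_def)
  have mono: "(Lmono T \<beta> :: _ \<Rightarrow> _ \<Rightarrow> 'a) \<in> Lcarr r (int p)"
    unfolding \<beta>_def p_def using T \<alpha> by (rule Lcarr_Lmono_shift)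
  let ?B = "\<lambda>i. \<phi> (int p + 1) (Lmono (insert i T) (\<beta>(i := Suc (\<beta> i))))"
  let ?C = "\<lambda>i. \<phi> (int p + 1) (Lmono (insert i T) \<beta>)"
  have "to_koszul r (n + 1) (diff (HomL r x X) n \<phi>) T \<alpha> = kos_sign p (n + 1) (diff X (int p + n) (\<phi> (int p) (Lmono T \<beta>))
      - (if even n then \<phi> (int p + 1) (Ldiff r x (Lmono T \<beta>)) else - \<phi> (int p + 1) (Ldiff r x (Lmono T \<beta>))))"
    using T \<alpha> mono unfolding p_def \<beta>_def by (simp add: to_koszul_def HomL_diff_apply)
  also have "\<dots> = kos_sign p (n + 1) (diff X (int p + n) (\<phi> (int p) (Lmono T \<beta>)))
      + (\<Sum>i\<in>{..<r} - T. kos_sign p (n + 1) (- (if even n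
          then smul X ((- 1) ^ c i * x i) (?B i) + (if 0 < \<beta> i then smul X (- ((- 1) ^ c i)) (?C i) else 0)
          else - (smul X ((- 1) ^ c i * x i) (?B i) + (if 0 < \<beta> i then smul X (- ((- 1) ^ c i)) (?C i) else 0)))))"
    unfolding HomL_Ldiff_Lmono[OF \<phi> T \<beta>, folded p_def] c_def by (rule kos_sign_diff_sum)
  also have "\<dots> = sg p (diff X (n + int p) (kos_sign p n (\<phi> (int p) (Lmono T \<beta>))))
      + (\<Sum>i\<in>{..<r} - T. sg (c i) (smul X (x i) (kos_sign (Suc p) n (?B i))
          - (if 0 < \<beta> i then kos_sign (Suc p) n (?C i) else 0)))"
    by (intro arg_cong2[where f = "(+)"] sum.cong refl kos_sign_differential HomL_mem[OF \<phi> mono]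
        kos_sign_dual_Ldiff_term[OF HomL_mem_any[OF \<phi>] HomL_mem_any[OF \<phi>]])
  also have "\<dots> = diff (KosX r x X) n (to_koszul r n \<phi>) T \<alpha>"
  proof -
    have "(\<Sum>i\<in>{..<r} - T. sg (c i) (smul X (x i) (to_koszul r n \<phi> (insert i T) \<alpha>)
          - mulU i (to_koszul r n \<phi> (insert i T)) \<alpha>))
        = (\<Sum>i\<in>{..<r} - T. sg (c i) (smul X (x i) (kos_sign (Suc p) n (?B i))
          - (if 0 < \<beta> i then kos_sign (Suc p) n (?C i) else 0)))"
    proof (rule sum.cong[OF refl])
      fix i assume i: "i \<in> {..<r} - T"
      show "sg (c i) (smul X (x i) (to_koszul r n \<phi> (insert i T) \<alpha>) - mulU i (to_koszul r n \<phi> (insert i T)) \<alpha>)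
          = sg (c i) (smul X (x i) (kos_sign (Suc p) n (?B i)) - (if 0 < \<beta> i then kos_sign (Suc p) n (?C i) else 0))"
        using to_koszul_insert[OF T i \<alpha>, of n \<phi>] mulU_to_koszul_insert[OF T i \<alpha>, of n \<phi>]
        by (simp add: p_def \<beta>_def)
    qed
    moreover have "to_koszul r n \<phi> T \<alpha> = kos_sign p n (\<phi> (int p) (Lmono T \<beta>))"
      using T \<alpha> by (simp add: to_koszul_def p_def \<beta>_def)
    ultimately show ?thesis
      using T \<alpha> unfolding KosX_diff_apply c_def p_def by (simp add: add.commute)
  qed
  finally show ?thesis .
qed

lemma to_koszul_diff:
  assumes \<phi>: "\<phi> \<in> carr (HomL r x X) n"
  shows "to_koszul r (n + 1) (diff (HomL r x X) n \<phi>) = diff (KosX r x X) n (to_koszul r n \<phi>)"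
proof (intro ext)
  fix T \<alpha>
  show "to_koszul r (n + 1) (diff (HomL r x X) n \<phi>) T \<alpha> = diff (KosX r x X) n (to_koszul r n \<phi>) T \<alpha>"
  proof (cases "T \<subseteq> {..<r} \<and> expvec r \<alpha>")
    case True
    then show ?thesis by (simp add: to_koszul_diff_coeff[OF \<phi>])
  next
    case outside: False
    then have "to_koszul r (n + 1) (diff (HomL r x X) n \<phi>) T \<alpha> = 0"
      by (auto simp: to_koszul_def)
    moreover have "diff (KosX r x X) n (to_koszul r n \<phi>) T \<alpha> = 0"
    proof (cases "expvec r \<alpha>")
      case False
      then show ?thesis by (rule KosX_diff_vanish[OF to_koszul_mem[OF \<phi>]])
    next
      case True
      with outside show ?thesis by (simp add: KosX_diff_apply)
    qed
    ultimately show ?thesis by simp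
  qed
qed

end

theorem theorem1p1:
  fixes r :: nat and x :: "nat \<Rightarrow> 'a::comm_ring_1" and X :: "('a, 'm::ab_group_add) cpx"
  assumes "is_complex X"
  shows "cpx_iso (HomL r x X) (KosX r x X)"
proof -
  interpret r_complex X by (rule r_complex.intro[OF assms])
  show ?thesis
    unfolding cpx_iso_def
    by (intro exI[where x = "to_koszul r"] allI conjI ballI bij_betw_to_koszul to_koszul_add
        to_koszul_smul to_koszul_diff)
qed

end
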